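(* (Differential equation.) Let $k\in\mathbb{N}$, let $H_k\in\mathcal{H}_k$ be a Dunkl-harmonic of degree $k$, and let $t$ be a positive integer. Then the Clifford--Hermite polynomial $C\!H_{2t}^{\mu}(H_k)=(D_+)^{2t}H_k$ satisfies \[ \big[\Delta_{\kappa} - 2\mathbb{E}\big]\, C\!H_{2t}^{\mu}(H_k) = -2(2t+k)\, C\!H_{2t}^{\mu}(H_k). \]
   Context: Let $R\subset\mathbb{R}^m$ be a reduced root system normalized so that $\langle\alpha,\alpha\rangle=2$ for all $\alpha\in R$, with positive subsystem $R_+$, and let $G\subset O(m)$ be the finite reflection group generated by the reflections $r_\alpha(x)=x-2\frac{\langle\alpha,x\rangle}{|\alpha|^2}\alpha$, $\alpha\in R$. Let $\kappa:R\to\mathbb{C}$ be a $G$-invariant multiplicity function, $\kappa_\alpha=\kappa(\alpha)$. The Dunkl operators are $T_i f(x)=\partial_{x_i}f(x)+\sum_{\alpha\in R_+}\kappa_\alpha\alpha_i\frac{f(x)-f(r_\alpha x)}{\langle\alpha,x\rangle}$, $i=1,\dots,m$; they commute. The Dunkl Laplacian is $\Delta_\kappa=\sum_{i=1}^m T_i^2$. Put $\gamma=\sum_{\alpha\in R_+}\kappa_\alpha$ and $\mu=m+2\gamma$. $\mathbb{E}=\sum_{i=1}^m x_i\partial_{x_i}$ is the Euler operator. $\mathcal{P}_k$ denotes real homogeneous polynomials of degree $k$ on $\mathbb{R}^m$ and $\mathcal{H}_k=\mathcal{P}_k\cap\ker\Delta_\kappa$. Let $\mathcal{C}l_{0,m}$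 be the Clifford algebra generated by $e_1,\dots,e_m$ with $e_ie_j+e_je_i=-2\delta_{ij}$. Set $\underline{x}=\sum_i e_ix_i$, $D_\kappa=\sum_i e_iT_i$, and $D_+=-D_\kappa+2\underline{x}$. The Clifford--Hermite polynomial is $C\!H_{2t}^{\mu}(H_k)=(D_+)^{2t}H_k$ (a scalar polynomial, since $D_+^2=-\Delta_\kappa-4|x|^2+2(2\mathbb{E}+\mu)$). *)

theory Defs
  imports "HOL-Analysis.Analysis"
begin

definition root_refl :: "real^'n \<Rightarrow> real^'n \<Rightarrow> real^'n" where
  "root_refl \<alpha> x = x - (2 * (\<alpha> \<bullet> x) / (\<alpha> \<bullet> \<alpha>)) *\<^sub>R \<alpha>"

definition reduced_root_system :: "(real^'n) set \<Rightarrow> bool" where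
  "reduced_root_system R \<longleftrightarrow> finite R \<and> 0 \<notin> R \<and>
     (\<forall>\<alpha>\<in>R. root_refl \<alpha> ` R = R) \<and>
     (\<forall>\<alpha>\<in>R. \<forall>c::real. c *\<^sub>R \<alpha> \<in> R \<longrightarrow> c = 1 \<or> c = -1)"

definition positive_subsystem :: "(real^'n) set \<Rightarrow> (real^'n) set \<Rightarrow> bool" where
  "positive_subsystem R Rp \<longleftrightarrow>
     (\<exists>\<beta>. (\<forall>\<alpha>\<in>R. \<alpha> \<bullet> \<beta> \<noteq> 0) \<and> Rp = {\<alpha>\<in>R. \<alpha> \<bullet> \<beta> > 0})"

inductive_set refl_group :: "(real^'n) set \<Rightarrow> (real^'n \<Rightarrow> real^'n) set" for R where
  rg_id: "id \<in> refl_group R"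
| rg_step: "g \<in> refl_group R \<Longrightarrow> \<alpha> \<in> R \<Longrightarrow> root_refl \<alpha> \<circ> g \<in> refl_group R"

definition multiplicity_function :: "(real^'n) set \<Rightarrow> (real^'n \<Rightarrow> complex) \<Rightarrow> bool" where
  "multiplicity_function R \<kappa> \<longleftrightarrow> (\<forall>g\<in>refl_group R. \<forall>\<alpha>\<in>R. g \<alpha> \<in> R \<and> \<kappa> (g \<alpha>) = \<kappa> \<alpha>)"

text \<open>Difference quotient (f x - f(r_alpha x))/<alpha,x>, extended on the hyperplane
  <alpha,x> = 0 by its limit (the directional derivative along alpha, valid since |alpha|^2 = 2).\<close>
definition divdiff :: "real^'n \<Rightarrow> (real^'n \<Rightarrow> complex) \<Rightarrow> real^'n \<Rightarrow> complex" where
  "divdiff \<alpha> f x = (if \<alpha> \<bullet> x = 0 then frechet_derivative f (at x) \<alpha>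
                     else (f x - f (root_refl \<alpha> x)) / complex_of_real (\<alpha> \<bullet> x))"

definition dunkl :: "(real^'n) set \<Rightarrow> (real^'n \<Rightarrow> complex) \<Rightarrow> 'n \<Rightarrow> (real^'n \<Rightarrow> complex) \<Rightarrow> real^'n \<Rightarrow> complex" where
  "dunkl Rp \<kappa> i f x = frechet_derivative f (at x) (axis i 1)
     + (\<Sum>\<alpha>\<in>Rp. \<kappa> \<alpha> * complex_of_real (\<alpha> $ i) * divdiff \<alpha> f x)"

definition dunkl_lap :: "(real^'n) set \<Rightarrow> (real^'n \<Rightarrow> complex) \<Rightarrow> (real^'n \<Rightarrow> complex) \<Rightarrow> real^'n \<Rightarrow> complex" where
  "dunkl_lap Rp \<kappa> f x = (\<Sum>i\<in>UNIV. dunkl Rp \<kappa> i (dunkl Rp \<kappa> i f) x)"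

definition euler_op :: "(real^'n \<Rightarrow> complex) \<Rightarrow> real^'n \<Rightarrow> complex" where
  "euler_op f x = (\<Sum>i\<in>UNIV. complex_of_real (x $ i) * frechet_derivative f (at x) (axis i 1))"

definition homog_poly :: "nat \<Rightarrow> (real^'n \<Rightarrow> real) \<Rightarrow> bool" where
  "homog_poly k p \<longleftrightarrow> (\<exists>c :: ('n \<Rightarrow> nat) \<Rightarrow> real.
     \<forall>x. p x = (\<Sum>a\<in>{a. sum a UNIV = k}. c a * (\<Prod>i\<in>UNIV. (x $ i) ^ a i)))"

definition dunkl_harmonics :: "(real^'n) set \<Rightarrow> (real^'n \<Rightarrow> complex) \<Rightarrow> nat \<Rightarrow> (real^'n \<Rightarrow> real) set" where
  "dunkl_harmonics Rp \<kappa> k = {H. homog_poly k H \<and>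
     (\<forall>x. dunkl_lap Rp \<kappa> (\<lambda>y. complex_of_real (H y)) x = 0)}"

section \<open>Complex Clifford algebra Cl_{0,m}: elements are coefficient functions on blades e_A, A \<subseteq> index set\<close>

type_synonym 'n clif = "'n set \<Rightarrow> complex"

text \<open>e_A e_B = sign(A,B) e_{A symdiff B}, with e_i e_j = - e_j e_i (i \<noteq> j) and e_i^2 = -1.\<close>
definition clif_sign :: "('n::{finite,linorder}) set \<Rightarrow> 'n set \<Rightarrow> complex" where
  "clif_sign A B = (-1) ^ (card {(i,j). i \<in> A \<and> j \<in> B \<and> j < i} + card (A \<inter> B))"

definition clif_mult :: "('n::{finite,linorder}) clif \<Rightarrow> 'n clif \<Rightarrow> 'n clif" where
  "clif_mult a b = (\<lambda>C. \<Sum>A\<in>UNIV. \<Sum>B\<in>UNIV.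
      (if (A - B) \<union> (B - A) = C then clif_sign A B * a A * b B else 0))"

definition clif_e :: "('n::{finite,linorder}) \<Rightarrow> 'n clif" where
  "clif_e i = (\<lambda>A. if A = {i} then 1 else 0)"

definition clif_scalar :: "complex \<Rightarrow> ('n::{finite,linorder}) clif" where
  "clif_scalar c = (\<lambda>A. if A = {} then c else 0)"

definition clif_x :: "(real,'n) vec \<Rightarrow> ('n::{finite,linorder}) clif" where
  "clif_x x = (\<lambda>A. \<Sum>i\<in>UNIV. if A = {i} then complex_of_real (x $ i) else 0)"

definition dunkl_cl :: "((real,'n) vec) set \<Rightarrow> ((real,'n) vec \<Rightarrow> complex) \<Rightarrow> 'n \<Rightarrow> ((real,'n) vec \<Rightarrow> ('n::{finite,linorder}) clif) \<Rightarrow> (real,'n) vec \<Rightarrow> 'n clif" where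
  "dunkl_cl Rp \<kappa> i F x = (\<lambda>A. dunkl Rp \<kappa> i (\<lambda>y. F y A) x)"

definition dirac_dunkl :: "((real,'n) vec) set \<Rightarrow> ((real,'n) vec \<Rightarrow> complex) \<Rightarrow> ((real,'n) vec \<Rightarrow> ('n::{finite,linorder}) clif) \<Rightarrow> (real,'n) vec \<Rightarrow> 'n clif" where
  "dirac_dunkl Rp \<kappa> F x = (\<lambda>C. \<Sum>i\<in>UNIV. clif_mult (clif_e i) (dunkl_cl Rp \<kappa> i F x) C)"

definition D_plus :: "((real,'n) vec) set \<Rightarrow> ((real,'n) vec \<Rightarrow> complex) \<Rightarrow> ((real,'n) vec \<Rightarrow> ('n::{finite,linorder}) clif) \<Rightarrow> (real,'n) vec \<Rightarrow> 'n clif" where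
  "D_plus Rp \<kappa> F x = (\<lambda>C. - dirac_dunkl Rp \<kappa> F x C + 2 * clif_mult (clif_x x) (F x) C)"

definition clifford_hermite :: "((real,'n) vec) set \<Rightarrow> ((real,'n) vec \<Rightarrow> complex) \<Rightarrow> nat \<Rightarrow> ((real,'n) vec \<Rightarrow> real) \<Rightarrow> (real,'n) vec \<Rightarrow> ('n::{finite,linorder}) clif" where
  "clifford_hermite Rp \<kappa> t H = (D_plus Rp \<kappa> ^^ (2 * t)) (\<lambda>x. clif_scalar (complex_of_real (H x)))"

end

theory Submission
  imports Defs
begin

text \<open>Write \<open>L = \<Delta>\<^sub>\<kappa> - 2E\<close> and \<open>D\<^sub>+ = \<Sum>\<^sub>i e\<^sub>i R\<^sub>i\<close> with \<open>R\<^sub>i = -T\<^sub>i + 2x\<^sub>i\<close>.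
  On polynomials the Dunkl operators commute, \<open>[\<Delta>\<^sub>\<kappa>, x\<^sub>i] = 2T\<^sub>i\<close> and \<open>[E, T\<^sub>i] = -T\<^sub>i\<close>, which give
  \<open>L R\<^sub>i = R\<^sub>i L - 2R\<^sub>i\<close>. Hence \<open>D\<^sub>+\<close> lowers the eigenvalue of \<open>L\<close> (acting on each Clifford
  component) by \<open>2\<close>. A Dunkl-harmonic \<open>H\<^sub>k\<close> satisfies \<open>L H\<^sub>k = -2k H\<^sub>k\<close> by Euler's identity, so
  \<open>L D\<^sub>+\<^sup>n H\<^sub>k = -2(n + k) D\<^sub>+\<^sup>n H\<^sub>k\<close> for every \<open>n\<close>, in particular for \<open>n = 2t\<close>.
  Since \<open>T\<^sub>i\<close> is defined through Frechet derivatives, all computations take place in the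
  inductively generated class of polynomial functions, where the derivatives exist and the
  operators act by Leibniz-type rules.\<close>

section \<open>Polynomial functions\<close>

inductive_set poly_fun :: "(real^'n \<Rightarrow> complex) set" where
  poly_fun_const: "(\<lambda>x. c) \<in> poly_fun"
| poly_fun_coord_mult: "q \<in> poly_fun \<Longrightarrow> (\<lambda>x. complex_of_real (x$i) * q x) \<in> poly_fun"
| poly_fun_add: "p \<in> poly_fun \<Longrightarrow> q \<in> poly_fun \<Longrightarrow> (\<lambda>x. p x + q x) \<in> poly_fun"

abbreviation fderiv :: "(real^'n \<Rightarrow> complex) \<Rightarrow> real^'n \<Rightarrow> real^'n \<Rightarrow> complex" where
  "fderiv q x \<equiv> frechet_derivative q (at x)"

lemma poly_fun_cmult: "q \<in> poly_fun \<Longrightarrow> (\<lambda>x. c * q x) \<in> poly_fun"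
proof (induction q rule: poly_fun.induct)
  case (poly_fun_coord_mult q i)
  then show ?case using poly_fun.poly_fun_coord_mult[of "\<lambda>x. c * q x" i] by (simp add: mult.left_commute)
next
  case (poly_fun_add p q)
  then show ?case using poly_fun.poly_fun_add[of "\<lambda>x. c * p x" "\<lambda>x. c * q x"] by (simp add: distrib_left)
qed (rule poly_fun.poly_fun_const)

lemma poly_fun_mult: "p \<in> poly_fun \<Longrightarrow> q \<in> poly_fun \<Longrightarrow> (\<lambda>x. p x * q x) \<in> poly_fun"
proof (induction p rule: poly_fun.induct)
  case (poly_fun_const c)
  then show ?case by (rule poly_fun_cmult)
next
  case (poly_fun_coord_mult p i)
  then show ?case using poly_fun.poly_fun_coord_mult[of "\<lambda>x. p x * q x" i] by (simp add: mult.assoc)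
next
  case (poly_fun_add p1 p2)
  then show ?case
    using poly_fun.poly_fun_add[of "\<lambda>x. p1 x * q x" "\<lambda>x. p2 x * q x"] by (simp add: distrib_right)
qed

lemma poly_fun_sum: "(\<And>i. i \<in> S \<Longrightarrow> f i \<in> poly_fun) \<Longrightarrow> (\<lambda>x. \<Sum>i\<in>S. f i x) \<in> poly_fun"
proof (induction S rule: infinite_finite_induct)
  case (insert a S)
  then show ?case using poly_fun_add[of "f a" "\<lambda>x. \<Sum>i\<in>S. f i x"] by simp
qed (use poly_fun_const[of 0] in simp_all)

lemma poly_fun_prod: "(\<And>i. i \<in> S \<Longrightarrow> f i \<in> poly_fun) \<Longrightarrow> (\<lambda>x. \<Prod>i\<in>S. f i x) \<in> poly_fun"
proof (induction S rule: infinite_finite_induct)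
  case (insert a S)
  then show ?case using poly_fun_mult[of "f a" "\<lambda>x. \<Prod>i\<in>S. f i x"] by simp
qed (use poly_fun_const[of 1] in simp_all)

lemma poly_fun_power: "q \<in> poly_fun \<Longrightarrow> (\<lambda>x. q x ^ n) \<in> poly_fun"
  using poly_fun_prod[of "{..<n}" "\<lambda>_. q"] by simp

lemma poly_fun_coord: "(\<lambda>x. complex_of_real (x$i)) \<in> poly_fun"
  using poly_fun_coord_mult[OF poly_fun_const[of 1], of i] by simp

lemma poly_fun_homog_poly: "homog_poly k H \<Longrightarrow> (\<lambda>x. complex_of_real (H x)) \<in> poly_fun"
proof -
  assume "homog_poly k H"
  then obtain c where c: "\<And>x. H x = (\<Sum>a\<in>{a. sum a UNIV = k}. c a * (\<Prod>i\<in>UNIV. (x $ i) ^ a i))"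
    unfolding homog_poly_def by blast
  have "(\<lambda>x. \<Sum>a\<in>{a. sum a UNIV = k}. complex_of_real (c a) * (\<Prod>i\<in>UNIV. complex_of_real (x $ i) ^ a i))
        \<in> poly_fun"
    by (intro poly_fun_sum poly_fun_cmult poly_fun_prod poly_fun_power poly_fun_coord)
  then show ?thesis unfolding c by simp
qed

lemma poly_fun_inner_mult: "q \<in> poly_fun \<Longrightarrow> (\<lambda>x. complex_of_real (a \<bullet> x) * q x) \<in> poly_fun"
proof -
  assume q: "q \<in> poly_fun"
  have "(\<lambda>x. \<Sum>j\<in>UNIV. complex_of_real (x$j) * (complex_of_real (a$j) * q x)) \<in> poly_fun"
    by (intro poly_fun_sum poly_fun_coord_mult poly_fun_cmult q)
  moreover have "(\<Sum>j\<in>UNIV. complex_of_real (x$j) * (complex_of_real (a$j) * q x))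
      = complex_of_real (a \<bullet> x) * q x" for x
    by (simp add: inner_vec_def sum_distrib_right mult.assoc mult.left_commute)
  ultimately show ?thesis by simp
qed

text \<open>Additivity forces \<open>L 0 = 0\<close>, which covers the empty and the infinite index sets.\<close>

lemma additive_on_poly_fun_sum:
  fixes L :: "(real^'n \<Rightarrow> complex) \<Rightarrow> 'a::ab_group_add"
  assumes add: "\<And>p q. p \<in> poly_fun \<Longrightarrow> q \<in> poly_fun \<Longrightarrow> L (\<lambda>y. p y + q y) = L p + L q"
    and f: "\<And>i. i \<in> S \<Longrightarrow> f i \<in> poly_fun"
  shows "L (\<lambda>y. \<Sum>i\<in>S. f i y) = (\<Sum>i\<in>S. L (f i))"
proof -
  have "L (\<lambda>y. 0) = L (\<lambda>y. 0 + 0)" by simp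
  also have "\<dots> = L (\<lambda>y. 0) + L (\<lambda>y. 0)" by (rule add) (rule poly_fun_const)+
  finally have zero: "L (\<lambda>y. 0) = 0" by simp
  from f show ?thesis
  proof (induction S rule: infinite_finite_induct)
    case (insert a S)
    have "L (\<lambda>y. \<Sum>i\<in>insert a S. f i y) = L (\<lambda>y. f a y + (\<Sum>i\<in>S. f i y))"
      using insert.hyps by simp
    also have "\<dots> = L (f a) + L (\<lambda>y. \<Sum>i\<in>S. f i y)"
      by (rule add) (use insert.prems in \<open>auto intro!: poly_fun_sum\<close>)
    finally show ?case using insert by simp
  qed (simp_all add: zero)
qed

lemma has_derivative_coord_complex:
  "((\<lambda>y::real^'n. complex_of_real (y$i)) has_derivative (\<lambda>v. complex_of_real (v$i))) (at x)"
  using has_derivative_of_real[OF bounded_linear_imp_has_derivative[OF bounded_linear_vec_nth]] .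

lemma poly_fun_has_derivative: "q \<in> poly_fun \<Longrightarrow> (q has_derivative fderiv q x) (at x)"
proof (induction q rule: poly_fun.induct)
  case (poly_fun_const c)
  then show ?case by (simp add: frechet_derivative_at[symmetric])
next
  case (poly_fun_coord_mult q i)
  have "((\<lambda>x. complex_of_real (x$i) * q x) has_derivative
      (\<lambda>h. complex_of_real (x$i) * fderiv q x h + complex_of_real (h$i) * q x)) (at x)"
    by (rule has_derivative_mult[OF has_derivative_coord_complex poly_fun_coord_mult.IH])
  then show ?case by (simp add: frechet_derivative_at[symmetric])
next
  case (poly_fun_add p q)
  have "((\<lambda>x. p x + q x) has_derivative (\<lambda>h. fderiv p x h + fderiv q x h)) (at x)"
    by (rule has_derivative_add[OF poly_fun_add.IH])
  then show ?case by (simp add: frechet_derivative_at[symmetric])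
qed

lemma linear_fderiv: "q \<in> poly_fun \<Longrightarrow> linear (fderiv q x)"
  using poly_fun_has_derivative has_derivative_linear by blast

lemma fderiv_const: "fderiv (\<lambda>x. c) x h = 0"
  by (simp add: frechet_derivative_at[OF has_derivative_const, symmetric])

lemma fderiv_add:
  "p \<in> poly_fun \<Longrightarrow> q \<in> poly_fun \<Longrightarrow> fderiv (\<lambda>x. p x + q x) x h = fderiv p x h + fderiv q x h"
  by (simp add: frechet_derivative_at[OF has_derivative_add[OF poly_fun_has_derivative
        poly_fun_has_derivative], symmetric])

lemma fderiv_cmult: "q \<in> poly_fun \<Longrightarrow> fderiv (\<lambda>x. c * q x) x h = c * fderiv q x h"
  by (simp add: frechet_derivative_at[OF has_derivative_mult_right[OF poly_fun_has_derivative], symmetric])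

lemma fderiv_coord_mult: "q \<in> poly_fun \<Longrightarrow>
    fderiv (\<lambda>x. complex_of_real (x$i) * q x) x h
    = complex_of_real (h$i) * q x + complex_of_real (x$i) * fderiv q x h"
  by (simp add: frechet_derivative_at[OF has_derivative_mult[OF has_derivative_coord_complex
        poly_fun_has_derivative], symmetric])

lemma poly_fun_fderiv: "q \<in> poly_fun \<Longrightarrow> (\<lambda>x. fderiv q x h) \<in> poly_fun"
proof (induction q rule: poly_fun.induct)
  case (poly_fun_const c)
  then show ?case using poly_fun.poly_fun_const[of 0] by (simp add: fderiv_const)
next
  case (poly_fun_coord_mult q i)
  have "(\<lambda>x. complex_of_real (h$i) * q x + complex_of_real (x$i) * fderiv q x h) \<in> poly_fun"
    using poly_fun_coord_mult by (intro poly_fun.poly_fun_add poly_fun_cmult poly_fun.poly_fun_coord_mult)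
  then show ?case by (simp add: fderiv_coord_mult[OF poly_fun_coord_mult.hyps])
next
  case (poly_fun_add p q)
  then show ?case by (simp add: fderiv_add poly_fun.poly_fun_add)
qed

section \<open>Reflections and divided differences\<close>

lemma root_refl_norm2: "\<alpha> \<bullet> \<alpha> = 2 \<Longrightarrow> root_refl \<alpha> x = x - (\<alpha> \<bullet> x) *\<^sub>R \<alpha>"
  by (simp add: root_refl_def)

lemma linear_root_refl: "linear (root_refl \<alpha>)"
  by (rule linearI) (simp_all add: root_refl_def inner_add_right add_divide_distrib scaleR_add_left
      scaleR_diff_right)

lemma root_refl_add: "root_refl \<alpha> (x + y) = root_refl \<alpha> x + root_refl \<alpha> y"
  by (rule linear_add[OF linear_root_refl])

lemma root_refl_scaleR: "root_refl \<alpha> (c *\<^sub>R x) = c *\<^sub>R root_refl \<alpha> x"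
  by (rule linear_scale[OF linear_root_refl])

lemma root_refl_inner: "\<alpha> \<bullet> \<alpha> = 2 \<Longrightarrow> root_refl \<alpha> a \<bullet> root_refl \<alpha> b = a \<bullet> b"
  by (simp add: root_refl_norm2 inner_diff_left inner_diff_right inner_commute algebra_simps)

lemma root_refl_involutive: "\<alpha> \<bullet> \<alpha> = 2 \<Longrightarrow> root_refl \<alpha> (root_refl \<alpha> x) = x"
  by (simp add: root_refl_norm2 inner_diff_right algebra_simps)

lemma root_refl_self: "\<alpha> \<bullet> \<alpha> = 2 \<Longrightarrow> root_refl \<alpha> \<alpha> = - \<alpha>"
  by (simp add: root_refl_norm2 vec_eq_iff)

lemma root_refl_uminus_root: "root_refl (- \<alpha>) = root_refl \<alpha>"
  by (rule ext) (simp add: root_refl_def)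

lemma root_refl_fixed: "\<alpha> \<bullet> x = 0 \<Longrightarrow> root_refl \<alpha> x = x"
  by (simp add: root_refl_def)

lemma root_refl_conj:
  assumes \<alpha>: "\<alpha> \<bullet> \<alpha> = 2" and \<beta>: "\<beta> \<bullet> \<beta> = 2"
  shows "root_refl (root_refl \<beta> \<alpha>) (root_refl \<beta> x) = root_refl \<beta> (root_refl \<alpha> x)"
proof -
  have \<beta>\<alpha>: "root_refl \<beta> \<alpha> \<bullet> root_refl \<beta> \<alpha> = 2" using root_refl_inner[OF \<beta>] \<alpha> by simp
  show ?thesis
    unfolding root_refl_norm2[OF \<alpha>] root_refl_norm2[OF \<beta>\<alpha>] root_refl_inner[OF \<beta>]
    by (simp add: root_refl_add[symmetric] root_refl_scaleR[symmetric] algebra_simps)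
qed

lemma poly_fun_reflect: "q \<in> poly_fun \<Longrightarrow> (\<lambda>x. q (root_refl \<alpha> x)) \<in> poly_fun"
proof (induction q rule: poly_fun.induct)
  case (poly_fun_coord_mult q i)
  define c where "c = - 2 / (\<alpha> \<bullet> \<alpha>) * \<alpha>$i"
  have "(\<lambda>x. complex_of_real (x$i) * q (root_refl \<alpha> x)
            + complex_of_real (\<alpha> \<bullet> x) * (complex_of_real c * q (root_refl \<alpha> x))) \<in> poly_fun"
    using poly_fun_coord_mult.IH
    by (intro poly_fun.poly_fun_add poly_fun.poly_fun_coord_mult poly_fun_inner_mult poly_fun_cmult)
  moreover have "complex_of_real (x$i) * q (root_refl \<alpha> x)
            + complex_of_real (\<alpha> \<bullet> x) * (complex_of_real c * q (root_refl \<alpha> x))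
      = complex_of_real (root_refl \<alpha> x $ i) * q (root_refl \<alpha> x)" for x
    by (simp add: c_def root_refl_def algebra_simps)
  ultimately show ?case by simp
qed (auto intro: poly_fun.intros)

lemma fderiv_reflect:
  assumes "q \<in> poly_fun"
  shows "fderiv (\<lambda>x. q (root_refl \<alpha> x)) x h = fderiv q (root_refl \<alpha> x) (root_refl \<alpha> h)"
proof -
  have "fderiv (q \<circ> root_refl \<alpha>) x = fderiv q (root_refl \<alpha> x) \<circ> root_refl \<alpha>"
    by (rule frechet_derivative_at[symmetric], rule diff_chain_at)
       (rule linear_imp_has_derivative[OF linear_root_refl], rule poly_fun_has_derivative[OF assms])
  then show ?thesis by (simp add: o_def)
qed

lemma divdiff_const: "divdiff \<alpha> (\<lambda>y. c) x = 0"
  by (simp add: divdiff_def fderiv_const)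

lemma divdiff_add:
  "p \<in> poly_fun \<Longrightarrow> q \<in> poly_fun \<Longrightarrow> divdiff \<alpha> (\<lambda>y. p y + q y) x = divdiff \<alpha> p x + divdiff \<alpha> q x"
  by (simp add: divdiff_def fderiv_add add_divide_distrib diff_divide_distrib)

lemma divdiff_cmult: "q \<in> poly_fun \<Longrightarrow> divdiff \<alpha> (\<lambda>y. c * q y) x = c * divdiff \<alpha> q x"
  by (simp add: divdiff_def fderiv_cmult right_diff_distrib)

text \<open>On the hyperplane \<open>\<alpha> \<bullet> x = 0\<close> the reflection fixes \<open>x\<close>, so there this is the
  ordinary Leibniz rule.\<close>

lemma divdiff_coord_mult:
  assumes \<alpha>: "\<alpha> \<bullet> \<alpha> = 2" and q: "q \<in> poly_fun"
  shows "divdiff \<alpha> (\<lambda>y. complex_of_real (y$i) * q y) x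
     = complex_of_real (\<alpha>$i) * q (root_refl \<alpha> x) + complex_of_real (x$i) * divdiff \<alpha> q x"
proof (cases "\<alpha> \<bullet> x = 0")
  case True
  then show ?thesis by (simp add: divdiff_def fderiv_coord_mult[OF q] root_refl_fixed)
next
  case False
  then show ?thesis by (simp add: divdiff_def root_refl_norm2[OF \<alpha>] field_simps)
qed

lemma divdiff_reflect:
  assumes \<alpha>: "\<alpha> \<bullet> \<alpha> = 2" and \<beta>: "\<beta> \<bullet> \<beta> = 2" and q: "q \<in> poly_fun"
  shows "divdiff \<alpha> (\<lambda>y. q (root_refl \<beta> y)) x = divdiff (root_refl \<beta> \<alpha>) q (root_refl \<beta> x)"
  by (cases "\<alpha> \<bullet> x = 0")
     (simp_all add: divdiff_def fderiv_reflect[OF q] root_refl_inner[OF \<beta>] root_refl_conj[OF \<alpha> \<beta>])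

lemma divdiff_uminus_root: "q \<in> poly_fun \<Longrightarrow> divdiff (- \<alpha>) q x = - divdiff \<alpha> q x"
  by (cases "\<alpha> \<bullet> x = 0")
     (simp_all add: divdiff_def root_refl_uminus_root linear_neg[OF linear_fderiv])

lemma poly_fun_divdiff:
  assumes "\<alpha> \<bullet> \<alpha> = 2"
  shows "q \<in> poly_fun \<Longrightarrow> divdiff \<alpha> q \<in> poly_fun"
proof (induction q rule: poly_fun.induct)
  case (poly_fun_const c)
  then show ?case using poly_fun.poly_fun_const[of 0] by (simp add: divdiff_const)
next
  case (poly_fun_coord_mult q i)
  then show ?case
    by (simp add: assms divdiff_coord_mult poly_fun.poly_fun_add poly_fun.poly_fun_coord_mult
        poly_fun_cmult poly_fun_reflect)
next
  case (poly_fun_add p q)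
  then show ?case by (simp add: divdiff_add poly_fun.poly_fun_add)
qed

section \<open>Dunkl operators\<close>

locale dunkl_system =
  fixes R Rp :: "(real^'n) set" and \<kappa> :: "real^'n \<Rightarrow> complex"
  assumes finite_roots: "finite R"
    and root_norm: "\<alpha> \<in> R \<Longrightarrow> \<alpha> \<bullet> \<alpha> = 2"
    and root_refl_closed: "\<alpha> \<in> R \<Longrightarrow> \<beta> \<in> R \<Longrightarrow> root_refl \<alpha> \<beta> \<in> R"
    and positive_subset: "Rp \<subseteq> R"
    and positive_iff: "\<alpha> \<in> R \<Longrightarrow> \<alpha> \<in> Rp \<longleftrightarrow> - \<alpha> \<notin> Rp"
    and multiplicity_invariant: "\<alpha> \<in> R \<Longrightarrow> \<beta> \<in> R \<Longrightarrow> \<kappa> (root_refl \<alpha> \<beta>) = \<kappa> \<beta>"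
begin

lemma finite_positive: "finite Rp"
  using finite_subset[OF positive_subset finite_roots] .

lemma multiplicity_uminus: "\<alpha> \<in> R \<Longrightarrow> \<kappa> (- \<alpha>) = \<kappa> \<alpha>"
  using multiplicity_invariant[of \<alpha> \<alpha>] root_refl_self[OF root_norm] by simp

lemma positive_root_norm: "\<alpha> \<in> Rp \<Longrightarrow> \<alpha> \<bullet> \<alpha> = 2"
  using root_norm positive_subset by auto

text \<open>A reflection permutes the positive roots up to sign: \<open>\<alpha> \<mapsto> \<plusminus>r\<^sub>\<beta> \<alpha>\<close> is a bijection of \<open>Rp\<close>.\<close>

lemma sum_positive_reflect:
  assumes \<beta>: "\<beta> \<in> R" and even: "\<And>\<gamma>. \<gamma> \<in> R \<Longrightarrow> \<phi> (- \<gamma>) = \<phi> \<gamma>"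
  shows "(\<Sum>\<alpha>\<in>Rp. \<phi> (root_refl \<beta> \<alpha>)) = (\<Sum>\<alpha>\<in>Rp. \<phi> \<alpha>)"
proof -
  define s where "s \<gamma> = (if \<gamma> \<in> Rp then \<gamma> else - \<gamma>)" for \<gamma>
  define g where "g \<alpha> = s (root_refl \<beta> \<alpha>)" for \<alpha>
  have s_positive: "\<gamma> \<in> R \<Longrightarrow> s \<gamma> \<in> Rp" for \<gamma> using positive_iff[of \<gamma>] by (auto simp: s_def)
  have g_positive: "\<alpha> \<in> Rp \<Longrightarrow> g \<alpha> \<in> Rp" for \<alpha>
    unfolding g_def using s_positive root_refl_closed[OF \<beta>] positive_subset by auto
  have \<phi>_s: "\<gamma> \<in> R \<Longrightarrow> \<phi> (s \<gamma>) = \<phi> \<gamma>" for \<gamma> using even by (auto simp: s_def)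
  have inj: "inj_on g Rp"
  proof (rule inj_onI)
    fix a a' assume a: "a \<in> Rp" "a' \<in> Rp" "g a = g a'"
    then have "root_refl \<beta> a = root_refl \<beta> a' \<or> root_refl \<beta> a = root_refl \<beta> (- a')"
      unfolding g_def s_def root_refl_scaleR[of \<beta> "-1", simplified]
      by (auto split: if_splits simp: minus_equation_iff)
    then have "a = a' \<or> a = - a'"
      by (metis root_refl_involutive[OF root_norm[OF \<beta>]])
    moreover have "a \<noteq> - a'" using a positive_iff[of a'] positive_subset by auto
    ultimately show "a = a'" by blast
  qed
  have "g ` Rp = Rp"
    by (rule endo_inj_surj[OF finite_positive _ inj]) (use g_positive in auto)
  then have "(\<Sum>\<alpha>\<in>Rp. \<phi> \<alpha>) = (\<Sum>\<alpha>\<in>Rp. \<phi> (g \<alpha>))"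
    using sum.reindex[OF inj, of \<phi>] by simp
  also have "\<dots> = (\<Sum>\<alpha>\<in>Rp. \<phi> (root_refl \<beta> \<alpha>))"
    using \<phi>_s root_refl_closed[OF \<beta>] positive_subset by (auto simp: g_def intro!: sum.cong)
  finally show ?thesis by simp
qed

definition dunkl_dir :: "real^'n \<Rightarrow> (real^'n \<Rightarrow> complex) \<Rightarrow> real^'n \<Rightarrow> complex" where
  "dunkl_dir \<xi> f x = fderiv f x \<xi> + (\<Sum>\<alpha>\<in>Rp. \<kappa> \<alpha> * complex_of_real (\<alpha> \<bullet> \<xi>) * divdiff \<alpha> f x)"

lemma dunkl_eq_dunkl_dir: "dunkl Rp \<kappa> i = dunkl_dir (axis i 1)"
  by (simp add: fun_eq_iff dunkl_def dunkl_dir_def inner_axis)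

lemma poly_fun_dunkl_dir: "q \<in> poly_fun \<Longrightarrow> dunkl_dir \<xi> q \<in> poly_fun"
  unfolding dunkl_dir_def[abs_def]
  by (intro poly_fun_add poly_fun_fderiv poly_fun_sum poly_fun_cmult poly_fun_divdiff positive_root_norm)

lemma dunkl_dir_const: "dunkl_dir \<xi> (\<lambda>y. c) x = 0"
  by (simp add: dunkl_dir_def fderiv_const divdiff_const)

lemma dunkl_dir_add:
  "p \<in> poly_fun \<Longrightarrow> q \<in> poly_fun \<Longrightarrow> dunkl_dir \<xi> (\<lambda>y. p y + q y) x = dunkl_dir \<xi> p x + dunkl_dir \<xi> q x"
  by (simp add: dunkl_dir_def fderiv_add divdiff_add distrib_left sum.distrib)

lemma dunkl_dir_cmult: "q \<in> poly_fun \<Longrightarrow> dunkl_dir \<xi> (\<lambda>y. c * q y) x = c * dunkl_dir \<xi> q x"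
  by (simp add: dunkl_dir_def fderiv_cmult divdiff_cmult distrib_left sum_distrib_left mult.left_commute)

lemma dunkl_dir_sum:
  "(\<And>i. i \<in> S \<Longrightarrow> f i \<in> poly_fun) \<Longrightarrow> dunkl_dir \<xi> (\<lambda>y. \<Sum>i\<in>S. f i y) x = (\<Sum>i\<in>S. dunkl_dir \<xi> (f i) x)"
  using additive_on_poly_fun_sum[of "\<lambda>q. dunkl_dir \<xi> q x"] dunkl_dir_add by blast

lemma dunkl_dir_coord_mult: "q \<in> poly_fun \<Longrightarrow>
    dunkl_dir \<xi> (\<lambda>y. complex_of_real (y$i) * q y) x
    = complex_of_real (x$i) * dunkl_dir \<xi> q x + complex_of_real (\<xi>$i) * q x
      + (\<Sum>\<alpha>\<in>Rp. \<kappa> \<alpha> * complex_of_real (\<alpha> \<bullet> \<xi>) * complex_of_real (\<alpha>$i) * q (root_refl \<alpha> x))"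
proof -
  assume q: "q \<in> poly_fun"
  have "(\<Sum>\<alpha>\<in>Rp. \<kappa> \<alpha> * complex_of_real (\<alpha> \<bullet> \<xi>) * divdiff \<alpha> (\<lambda>y. complex_of_real (y$i) * q y) x)
      = (\<Sum>\<alpha>\<in>Rp. \<kappa> \<alpha> * complex_of_real (\<alpha> \<bullet> \<xi>) *
           (complex_of_real (\<alpha>$i) * q (root_refl \<alpha> x) + complex_of_real (x$i) * divdiff \<alpha> q x))"
    by (simp add: divdiff_coord_mult[OF positive_root_norm q])
  then show ?thesis
    unfolding dunkl_dir_def fderiv_coord_mult[OF q]
    by (simp add: sum_distrib_left sum.distrib algebra_simps)
qed

lemma dunkl_dir_linear_dir: "q \<in> poly_fun \<Longrightarrow>
    dunkl_dir (a *\<^sub>R \<xi> + b *\<^sub>R \<eta>) q x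
    = complex_of_real a * dunkl_dir \<xi> q x + complex_of_real b * dunkl_dir \<eta> q x"
proof -
  assume q: "q \<in> poly_fun"
  have "fderiv q x (a *\<^sub>R \<xi> + b *\<^sub>R \<eta>) = a *\<^sub>R fderiv q x \<xi> + b *\<^sub>R fderiv q x \<eta>"
    by (simp only: linear_add[OF linear_fderiv[OF q]] linear_scale[OF linear_fderiv[OF q]])
  then have "fderiv q x (a *\<^sub>R \<xi> + b *\<^sub>R \<eta>)
      = complex_of_real a * fderiv q x \<xi> + complex_of_real b * fderiv q x \<eta>"
    by (simp add: scaleR_conv_of_real)
  then show ?thesis
    unfolding dunkl_dir_def
    by (simp add: inner_add_right sum_distrib_left sum.distrib algebra_simps)
qed

lemma dunkl_dir_basis_expansion:
  assumes q: "q \<in> poly_fun"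
  shows "dunkl_dir \<xi> q x = (\<Sum>j\<in>UNIV. complex_of_real (\<xi>$j) * dunkl_dir (axis j 1) q x)"
proof -
  have "fderiv q x \<xi> = fderiv q x (\<Sum>j\<in>UNIV. (\<xi>$j) *\<^sub>R axis j 1)"
    using basis_expansion[of \<xi>] by (simp add: scalar_mult_eq_scaleR)
  also have "\<dots> = (\<Sum>j\<in>UNIV. (\<xi>$j) *\<^sub>R fderiv q x (axis j 1))"
    by (simp only: linear_sum[OF linear_fderiv[OF q]] linear_scale[OF linear_fderiv[OF q]])
  also have "\<dots> = (\<Sum>j\<in>UNIV. complex_of_real (\<xi>$j) * fderiv q x (axis j 1))"
    by (simp add: scaleR_conv_of_real)
  moreover have "\<alpha> \<bullet> \<xi> = (\<Sum>j\<in>UNIV. \<xi>$j * (\<alpha> \<bullet> axis j 1))" for \<alpha>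
    by (simp only: inner_axis inner_real_def mult_1_right) (simp add: inner_vec_def mult.commute)
  ultimately show ?thesis
    unfolding dunkl_dir_def
    by (simp add: sum_distrib_left sum_distrib_right sum.distrib algebra_simps
        sum.swap[of _ UNIV Rp])
qed

text \<open>This is where the reflection invariance of \<open>\<kappa>\<close> enters.\<close>

lemma dunkl_dir_reflect:
  assumes \<beta>: "\<beta> \<in> R" and q: "q \<in> poly_fun"
  shows "dunkl_dir \<xi> (\<lambda>y. q (root_refl \<beta> y)) x = dunkl_dir (root_refl \<beta> \<xi>) q (root_refl \<beta> x)"
proof -
  define \<phi> where "\<phi> \<gamma> = \<kappa> \<gamma> * complex_of_real (\<gamma> \<bullet> root_refl \<beta> \<xi>) * divdiff \<gamma> q (root_refl \<beta> x)" for \<gamma>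
  have "(\<Sum>\<alpha>\<in>Rp. \<kappa> \<alpha> * complex_of_real (\<alpha> \<bullet> \<xi>) * divdiff \<alpha> (\<lambda>y. q (root_refl \<beta> y)) x)
      = (\<Sum>\<alpha>\<in>Rp. \<phi> (root_refl \<beta> \<alpha>))"
    using positive_subset
    by (auto simp: \<phi>_def divdiff_reflect[OF root_norm root_norm[OF \<beta>] q]
        root_refl_inner[OF root_norm[OF \<beta>]] multiplicity_invariant[OF \<beta>] intro!: sum.cong)
  also have "\<dots> = (\<Sum>\<alpha>\<in>Rp. \<phi> \<alpha>)"
    by (rule sum_positive_reflect[OF \<beta>]) (simp add: \<phi>_def multiplicity_uminus divdiff_uminus_root[OF q])
  finally show ?thesis by (simp add: dunkl_dir_def fderiv_reflect[OF q] \<phi>_def)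
qed

lemma dunkl_dir_reflect_sum:
  assumes q: "q \<in> poly_fun"
  shows "dunkl_dir \<xi> (\<lambda>y. \<Sum>\<alpha>\<in>Rp. c \<alpha> * q (root_refl \<alpha> y)) x
     = (\<Sum>\<alpha>\<in>Rp. c \<alpha> * (dunkl_dir \<xi> q (root_refl \<alpha> x)
                         - complex_of_real (\<alpha> \<bullet> \<xi>) * dunkl_dir \<alpha> q (root_refl \<alpha> x)))"
proof -
  have "dunkl_dir (root_refl \<alpha> \<xi>) q y = dunkl_dir \<xi> q y - complex_of_real (\<alpha> \<bullet> \<xi>) * dunkl_dir \<alpha> q y"
    if "\<alpha> \<in> Rp" for \<alpha> y
    using dunkl_dir_linear_dir[OF q, of 1 \<xi> "- (\<alpha> \<bullet> \<xi>)" \<alpha> y]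
    by (simp add: root_refl_norm2[OF positive_root_norm[OF that]])
  then show ?thesis
    using positive_subset
    by (auto simp: dunkl_dir_sum poly_fun_cmult poly_fun_reflect q dunkl_dir_cmult
        dunkl_dir_reflect intro!: sum.cong)
qed

lemma dunkl_dir_dunkl_dir_coord_mult:
  assumes q: "q \<in> poly_fun"
  shows "dunkl_dir \<xi> (dunkl_dir \<eta> (\<lambda>y. complex_of_real (y$i) * q y)) x
    = complex_of_real (x$i) * dunkl_dir \<xi> (dunkl_dir \<eta> q) x + complex_of_real (\<xi>$i) * dunkl_dir \<eta> q x
      + (\<Sum>\<alpha>\<in>Rp. \<kappa> \<alpha> * complex_of_real (\<alpha> \<bullet> \<xi>) * complex_of_real (\<alpha>$i) * dunkl_dir \<eta> q (root_refl \<alpha> x))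
      + complex_of_real (\<eta>$i) * dunkl_dir \<xi> q x
      + (\<Sum>\<alpha>\<in>Rp. \<kappa> \<alpha> * complex_of_real (\<alpha> \<bullet> \<eta>) * complex_of_real (\<alpha>$i) *
           (dunkl_dir \<xi> q (root_refl \<alpha> x) - complex_of_real (\<alpha> \<bullet> \<xi>) * dunkl_dir \<alpha> q (root_refl \<alpha> x)))"
proof -
  define c where "c \<alpha> = \<kappa> \<alpha> * complex_of_real (\<alpha> \<bullet> \<eta>) * complex_of_real (\<alpha>$i)" for \<alpha>
  have Tq: "dunkl_dir \<eta> q \<in> poly_fun" by (rule poly_fun_dunkl_dir[OF q])
  have A: "(\<lambda>y. complex_of_real (y$i) * dunkl_dir \<eta> q y) \<in> poly_fun" by (rule poly_fun_coord_mult[OF Tq])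
  have B: "(\<lambda>y. complex_of_real (\<eta>$i) * q y) \<in> poly_fun" by (rule poly_fun_cmult[OF q])
  have C: "(\<lambda>y. \<Sum>\<alpha>\<in>Rp. c \<alpha> * q (root_refl \<alpha> y)) \<in> poly_fun"
    by (intro poly_fun_sum poly_fun_cmult poly_fun_reflect q)
  have "dunkl_dir \<eta> (\<lambda>y. complex_of_real (y$i) * q y)
     = (\<lambda>y. (complex_of_real (y$i) * dunkl_dir \<eta> q y + complex_of_real (\<eta>$i) * q y)
            + (\<Sum>\<alpha>\<in>Rp. c \<alpha> * q (root_refl \<alpha> y)))"
    by (simp add: fun_eq_iff c_def dunkl_dir_coord_mult[OF q])
  then have "dunkl_dir \<xi> (dunkl_dir \<eta> (\<lambda>y. complex_of_real (y$i) * q y)) x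
     = (dunkl_dir \<xi> (\<lambda>y. complex_of_real (y$i) * dunkl_dir \<eta> q y) x
        + dunkl_dir \<xi> (\<lambda>y. complex_of_real (\<eta>$i) * q y) x)
       + dunkl_dir \<xi> (\<lambda>y. \<Sum>\<alpha>\<in>Rp. c \<alpha> * q (root_refl \<alpha> y)) x"
    by (simp only: dunkl_dir_add[OF poly_fun_add[OF A B] C] dunkl_dir_add[OF A B])
  then show ?thesis
    by (simp only: dunkl_dir_coord_mult[OF Tq] dunkl_dir_cmult[OF q] dunkl_dir_reflect_sum[OF q]
        c_def add.assoc)
qed

lemma dunkl_dir_commute: "q \<in> poly_fun \<Longrightarrow> dunkl_dir \<xi> (dunkl_dir \<eta> q) x = dunkl_dir \<eta> (dunkl_dir \<xi> q) x"
proof (induction q arbitrary: \<xi> \<eta> x rule: poly_fun.induct)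
  case (poly_fun_const c)
  have "dunkl_dir \<eta> (\<lambda>x. c) = (\<lambda>x. 0)" for \<eta> by (simp add: fun_eq_iff dunkl_dir_const)
  then show ?case by (simp add: dunkl_dir_const)
next
  case (poly_fun_coord_mult q i)
  then show ?case
    unfolding dunkl_dir_dunkl_dir_coord_mult[OF poly_fun_coord_mult.hyps]
    by (simp add: algebra_simps sum.distrib sum_subtractf sum_distrib_left)
next
  case (poly_fun_add p q)
  have "dunkl_dir \<eta> (\<lambda>y. p y + q y) = (\<lambda>y. dunkl_dir \<eta> p y + dunkl_dir \<eta> q y)" for \<eta>
    by (simp add: fun_eq_iff dunkl_dir_add[OF poly_fun_add.hyps])
  then show ?case
    using poly_fun_add.IH
    by (simp add: dunkl_dir_add poly_fun_dunkl_dir poly_fun_add.hyps)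
qed

end

section \<open>Dunkl Laplacian and Euler operator\<close>

lemma euler_op_fderiv:
  assumes q: "q \<in> poly_fun"
  shows "euler_op q x = fderiv q x x"
proof -
  have "fderiv q x x = fderiv q x (\<Sum>j\<in>UNIV. (x$j) *\<^sub>R axis j 1)"
    using basis_expansion[of x] by (simp add: scalar_mult_eq_scaleR)
  also have "\<dots> = (\<Sum>j\<in>UNIV. (x$j) *\<^sub>R fderiv q x (axis j 1))"
    by (simp only: linear_sum[OF linear_fderiv[OF q]] linear_scale[OF linear_fderiv[OF q]])
  finally show ?thesis by (simp add: euler_op_def scaleR_conv_of_real)
qed

lemma poly_fun_euler_op: "q \<in> poly_fun \<Longrightarrow> euler_op q \<in> poly_fun"
  unfolding euler_op_def[abs_def] by (intro poly_fun_sum poly_fun_coord_mult poly_fun_fderiv)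

lemma euler_op_add: "p \<in> poly_fun \<Longrightarrow> q \<in> poly_fun \<Longrightarrow> euler_op (\<lambda>y. p y + q y) x = euler_op p x + euler_op q x"
  by (simp add: euler_op_fderiv poly_fun_add fderiv_add)

lemma euler_op_cmult: "q \<in> poly_fun \<Longrightarrow> euler_op (\<lambda>y. c * q y) x = c * euler_op q x"
  by (simp add: euler_op_fderiv poly_fun_cmult fderiv_cmult)

lemma euler_op_sum:
  "(\<And>i. i \<in> S \<Longrightarrow> f i \<in> poly_fun) \<Longrightarrow> euler_op (\<lambda>y. \<Sum>i\<in>S. f i y) x = (\<Sum>i\<in>S. euler_op (f i) x)"
  using additive_on_poly_fun_sum[of "\<lambda>q. euler_op q x"] euler_op_add by blast

lemma euler_op_coord_mult: "q \<in> poly_fun \<Longrightarrow>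
    euler_op (\<lambda>y. complex_of_real (y$i) * q y) x = complex_of_real (x$i) * (q x + euler_op q x)"
  by (simp add: euler_op_fderiv poly_fun_coord_mult fderiv_coord_mult distrib_left)

lemma euler_op_reflect: "q \<in> poly_fun \<Longrightarrow> euler_op (\<lambda>y. q (root_refl \<alpha> y)) x = euler_op q (root_refl \<alpha> x)"
  by (simp add: euler_op_fderiv poly_fun_reflect fderiv_reflect)

lemma homog_poly_scaleR:
  assumes "homog_poly k H"
  shows "H (t *\<^sub>R x) = t ^ k * H x"
proof -
  obtain c where c: "\<And>x. H x = (\<Sum>a\<in>{a. sum a UNIV = k}. c a * (\<Prod>i\<in>UNIV. (x $ i) ^ a i))"
    using assms unfolding homog_poly_def by blast
  have "(\<Prod>i\<in>UNIV. ((t *\<^sub>R x) $ i) ^ a i) = t ^ k * (\<Prod>i\<in>UNIV. (x $ i) ^ a i)"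
    if "sum a UNIV = k" for a
    using that by (simp add: power_mult_distrib prod.distrib power_sum[symmetric])
  then show ?thesis unfolding c sum_distrib_left by (simp add: mult.left_commute)
qed

text \<open>Euler's identity, obtained by differentiating \<open>t \<mapsto> H (t x) = t\<^sup>k H x\<close> at \<open>t = 1\<close>.\<close>

lemma euler_op_homog_poly:
  assumes h: "homog_poly k H"
  shows "euler_op (\<lambda>y. complex_of_real (H y)) x = of_nat k * complex_of_real (H x)"
proof -
  define H' where "H' y = complex_of_real (H y)" for y
  have P: "H' \<in> poly_fun" unfolding H'_def[abs_def] by (rule poly_fun_homog_poly[OF h])
  have "((\<lambda>t::real. H' (t *\<^sub>R x)) has_derivative (\<lambda>s. fderiv H' x (s *\<^sub>R x))) (at 1)"
    using diff_chain_at[OF bounded_linear_imp_has_derivative[OF bounded_linear_scaleR_left]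
        poly_fun_has_derivative[OF P, of "1 *\<^sub>R x"]]
    by (simp add: o_def)
  moreover have "(\<lambda>t::real. H' (t *\<^sub>R x)) = (\<lambda>t. complex_of_real t ^ k * H' x)"
    by (simp add: fun_eq_iff H'_def homog_poly_scaleR[OF h])
  ultimately have "((\<lambda>t. complex_of_real t ^ k * H' x) has_derivative (\<lambda>s. fderiv H' x (s *\<^sub>R x))) (at 1)"
    by simp
  moreover have "((\<lambda>t::real. complex_of_real t ^ k * H' x) has_derivative
      (\<lambda>s. of_nat k * complex_of_real s * complex_of_real 1 ^ (k - 1) * H' x)) (at 1)"
    by (rule has_derivative_mult_left[OF has_derivative_power[OF
          bounded_linear_imp_has_derivative[OF bounded_linear_of_real]]])
  ultimately have "(\<lambda>s. fderiv H' x (s *\<^sub>R x))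
      = (\<lambda>s. of_nat k * complex_of_real s * complex_of_real 1 ^ (k - 1) * H' x)"
    by (rule has_derivative_unique)
  from fun_cong[OF this, of 1] have "fderiv H' x x = of_nat k * H' x" by simp
  then show ?thesis using euler_op_fderiv[OF P, of x] by (simp add: H'_def[abs_def])
qed

context dunkl_system
begin

lemma dunkl_lap_eq: "dunkl_lap Rp \<kappa> f x = (\<Sum>j\<in>UNIV. dunkl_dir (axis j 1) (dunkl_dir (axis j 1) f) x)"
  by (simp add: dunkl_lap_def dunkl_eq_dunkl_dir)

lemma poly_fun_dunkl_lap: "q \<in> poly_fun \<Longrightarrow> dunkl_lap Rp \<kappa> q \<in> poly_fun"
  unfolding dunkl_lap_eq[abs_def] by (intro poly_fun_sum poly_fun_dunkl_dir)

lemma dunkl_lap_add: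
  assumes p: "p \<in> poly_fun" and q: "q \<in> poly_fun"
  shows "dunkl_lap Rp \<kappa> (\<lambda>y. p y + q y) x = dunkl_lap Rp \<kappa> p x + dunkl_lap Rp \<kappa> q x"
proof -
  have "dunkl_dir \<xi> (\<lambda>y. p y + q y) = (\<lambda>y. dunkl_dir \<xi> p y + dunkl_dir \<xi> q y)" for \<xi>
    by (simp add: fun_eq_iff dunkl_dir_add[OF p q])
  then show ?thesis
    by (simp add: dunkl_lap_eq dunkl_dir_add poly_fun_dunkl_dir p q sum.distrib)
qed

lemma dunkl_lap_cmult:
  assumes q: "q \<in> poly_fun"
  shows "dunkl_lap Rp \<kappa> (\<lambda>y. c * q y) x = c * dunkl_lap Rp \<kappa> q x"
proof -
  have "dunkl_dir \<xi> (\<lambda>y. c * q y) = (\<lambda>y. c * dunkl_dir \<xi> q y)" for \<xi>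
    by (simp add: fun_eq_iff dunkl_dir_cmult[OF q])
  then show ?thesis
    by (simp add: dunkl_lap_eq dunkl_dir_cmult poly_fun_dunkl_dir q sum_distrib_left)
qed

lemma dunkl_lap_dunkl_dir:
  assumes q: "q \<in> poly_fun"
  shows "dunkl_lap Rp \<kappa> (dunkl_dir \<xi> q) x = dunkl_dir \<xi> (dunkl_lap Rp \<kappa> q) x"
proof -
  have "dunkl_dir (axis j 1) (dunkl_dir \<xi> q) = dunkl_dir \<xi> (dunkl_dir (axis j 1) q)" for j
    by (simp add: fun_eq_iff dunkl_dir_commute[OF q])
  then have "dunkl_lap Rp \<kappa> (dunkl_dir \<xi> q) x
      = (\<Sum>j\<in>UNIV. dunkl_dir \<xi> (dunkl_dir (axis j 1) (dunkl_dir (axis j 1) q)) x)"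
    by (simp add: dunkl_lap_eq dunkl_dir_commute[OF poly_fun_dunkl_dir[OF q]])
  also have "\<dots> = dunkl_dir \<xi> (dunkl_lap Rp \<kappa> q) x"
    unfolding dunkl_lap_eq[abs_def] by (rule dunkl_dir_sum[symmetric]) (intro poly_fun_dunkl_dir q)
  finally show ?thesis .
qed

text \<open>The reflection terms produced by the two Dunkl operators cancel after summing over \<open>j\<close>,
  because \<open>\<Sum>\<^sub>j \<alpha>\<^sub>j T\<^sub>j = T\<^sub>\<alpha>\<close> and \<open>\<Sum>\<^sub>j \<alpha>\<^sub>j\<^sup>2 = 2\<close>.\<close>

lemma dunkl_lap_coord_mult:
  assumes q: "q \<in> poly_fun"
  shows "dunkl_lap Rp \<kappa> (\<lambda>y. complex_of_real (y$i) * q y) x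
    = complex_of_real (x$i) * dunkl_lap Rp \<kappa> q x + 2 * dunkl_dir (axis i 1) q x"
proof -
  define D where "D j = dunkl_dir (axis j 1) q" for j
  define r where "r j \<alpha> = \<kappa> \<alpha> * complex_of_real (\<alpha>$i) * (2 * complex_of_real (\<alpha>$j) * D j (root_refl \<alpha> x)
      - complex_of_real (\<alpha>$j) * complex_of_real (\<alpha>$j) * dunkl_dir \<alpha> q (root_refl \<alpha> x))" for j \<alpha>
  have T: "dunkl_dir (axis j 1) (dunkl_dir (axis j 1) (\<lambda>y. complex_of_real (y$i) * q y)) x
     = complex_of_real (x$i) * dunkl_dir (axis j 1) (D j) x + 2 * complex_of_real (axis j 1 $ i) * D j x
       + (\<Sum>\<alpha>\<in>Rp. r j \<alpha>)" for j
    unfolding dunkl_dir_dunkl_dir_coord_mult[OF q] D_def r_def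
    by (simp add: inner_axis sum.distrib[symmetric] sum_subtractf[symmetric] algebra_simps)
  have axis_sum: "(\<Sum>j\<in>UNIV. 2 * complex_of_real (axis j 1 $ i) * D j x) = 2 * D i x"
    by (simp add: axis_def if_distrib if_distribR cong: if_cong)
  have D_sum: "(\<Sum>j\<in>UNIV. complex_of_real (\<alpha>$j) * D j y) = dunkl_dir \<alpha> q y" for \<alpha> y
    unfolding D_def using dunkl_dir_basis_expansion[OF q, of \<alpha> y] by simp
  have norm_sum: "(\<Sum>j\<in>UNIV. complex_of_real (\<alpha>$j) * complex_of_real (\<alpha>$j)) = 2" if "\<alpha> \<in> Rp" for \<alpha>
  proof -
    have "(\<Sum>j\<in>UNIV. (\<alpha>$j) * (\<alpha>$j)) = 2" using positive_root_norm[OF that] by (simp add: inner_vec_def)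
    then show ?thesis by (simp flip: of_real_mult of_real_sum)
  qed
  have "(\<Sum>j\<in>UNIV. \<Sum>\<alpha>\<in>Rp. r j \<alpha>)
      = (\<Sum>\<alpha>\<in>Rp. \<kappa> \<alpha> * complex_of_real (\<alpha>$i) *
           (2 * (\<Sum>j\<in>UNIV. complex_of_real (\<alpha>$j) * D j (root_refl \<alpha> x))
            - (\<Sum>j\<in>UNIV. complex_of_real (\<alpha>$j) * complex_of_real (\<alpha>$j)) * dunkl_dir \<alpha> q (root_refl \<alpha> x)))"
    unfolding r_def
    by (subst sum.swap) (simp add: sum_distrib_left sum_distrib_right sum_subtractf algebra_simps)
  also have "\<dots> = 0" by (simp add: D_sum norm_sum cong: sum.cong)
  finally have reflection_terms: "(\<Sum>j\<in>UNIV. \<Sum>\<alpha>\<in>Rp. r j \<alpha>) = 0" .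
  show ?thesis
    unfolding dunkl_lap_eq T sum.distrib axis_sum reflection_terms
    by (simp add: D_def sum_distrib_left)
qed

lemma euler_op_dunkl_dir_coord_mult_step:
  assumes q: "q \<in> poly_fun"
    and IH: "euler_op (dunkl_dir \<xi> q) x = dunkl_dir \<xi> (euler_op q) x - dunkl_dir \<xi> q x"
  shows "euler_op (dunkl_dir \<xi> (\<lambda>y. complex_of_real (y$i) * q y)) x
    = dunkl_dir \<xi> (euler_op (\<lambda>y. complex_of_real (y$i) * q y)) x
      - dunkl_dir \<xi> (\<lambda>y. complex_of_real (y$i) * q y) x"
proof -
  define c where "c \<alpha> = \<kappa> \<alpha> * complex_of_real (\<alpha> \<bullet> \<xi>) * complex_of_real (\<alpha>$i)" for \<alpha>
  have Tq: "dunkl_dir \<xi> q \<in> poly_fun" by (rule poly_fun_dunkl_dir[OF q])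
  have Eq: "euler_op q \<in> poly_fun" by (rule poly_fun_euler_op[OF q])
  have A: "(\<lambda>y. complex_of_real (y$i) * dunkl_dir \<xi> q y) \<in> poly_fun" by (rule poly_fun_coord_mult[OF Tq])
  have B: "(\<lambda>y. complex_of_real (\<xi>$i) * q y) \<in> poly_fun" by (rule poly_fun_cmult[OF q])
  have C: "(\<lambda>y. \<Sum>\<alpha>\<in>Rp. c \<alpha> * q (root_refl \<alpha> y)) \<in> poly_fun"
    by (intro poly_fun_sum poly_fun_cmult poly_fun_reflect q)
  have T_xq: "dunkl_dir \<xi> (\<lambda>y. complex_of_real (y$i) * q y)
     = (\<lambda>y. (complex_of_real (y$i) * dunkl_dir \<xi> q y + complex_of_real (\<xi>$i) * q y)
            + (\<Sum>\<alpha>\<in>Rp. c \<alpha> * q (root_refl \<alpha> y)))"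
    by (simp add: fun_eq_iff c_def dunkl_dir_coord_mult[OF q])
  have "euler_op (dunkl_dir \<xi> (\<lambda>y. complex_of_real (y$i) * q y)) x
     = complex_of_real (x$i) * (dunkl_dir \<xi> q x + euler_op (dunkl_dir \<xi> q) x)
       + complex_of_real (\<xi>$i) * euler_op q x + (\<Sum>\<alpha>\<in>Rp. c \<alpha> * euler_op q (root_refl \<alpha> x))"
    unfolding T_xq
    by (simp only: euler_op_add[OF poly_fun_add[OF A B] C] euler_op_add[OF A B]
        euler_op_coord_mult[OF Tq] euler_op_cmult[OF q]
        euler_op_sum[OF poly_fun_cmult[OF poly_fun_reflect[OF q]]]
        euler_op_cmult[OF poly_fun_reflect[OF q]] euler_op_reflect[OF q])
  moreover have "euler_op (\<lambda>y. complex_of_real (y$i) * q y)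
      = (\<lambda>y. complex_of_real (y$i) * (q y + euler_op q y))"
    by (simp add: fun_eq_iff euler_op_coord_mult[OF q])
  then have "dunkl_dir \<xi> (euler_op (\<lambda>y. complex_of_real (y$i) * q y)) x
     = complex_of_real (x$i) * (dunkl_dir \<xi> q x + dunkl_dir \<xi> (euler_op q) x)
       + complex_of_real (\<xi>$i) * (q x + euler_op q x)
       + (\<Sum>\<alpha>\<in>Rp. c \<alpha> * (q (root_refl \<alpha> x) + euler_op q (root_refl \<alpha> x)))"
    by (simp only: dunkl_dir_coord_mult[OF poly_fun_add[OF q Eq]] dunkl_dir_add[OF q Eq] c_def)
  ultimately show ?thesis
    unfolding T_xq using IH by (simp add: algebra_simps sum.distrib)
qed

lemma euler_op_dunkl_dir:
  "q \<in> poly_fun \<Longrightarrow> euler_op (dunkl_dir \<xi> q) x = dunkl_dir \<xi> (euler_op q) x - dunkl_dir \<xi> q x"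
proof (induction q arbitrary: x rule: poly_fun.induct)
  case (poly_fun_const c)
  have "dunkl_dir \<xi> (\<lambda>x. c) = (\<lambda>x. 0)" "euler_op (\<lambda>x. c) = (\<lambda>x. 0)"
    by (simp_all add: fun_eq_iff dunkl_dir_const euler_op_def fderiv_const)
  then show ?case by (simp add: dunkl_dir_const euler_op_def fderiv_const)
next
  case (poly_fun_coord_mult q i)
  then show ?case by (intro euler_op_dunkl_dir_coord_mult_step)
next
  case (poly_fun_add p q)
  have "dunkl_dir \<xi> (\<lambda>y. p y + q y) = (\<lambda>y. dunkl_dir \<xi> p y + dunkl_dir \<xi> q y)"
    "euler_op (\<lambda>y. p y + q y) = (\<lambda>y. euler_op p y + euler_op q y)"
    by (simp_all add: fun_eq_iff dunkl_dir_add euler_op_add poly_fun_add.hyps)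
  then show ?case
    using poly_fun_add
    by (simp add: euler_op_add dunkl_dir_add poly_fun_dunkl_dir poly_fun_euler_op)
qed

end

section \<open>Clifford--Hermite polynomials\<close>

definition hermite_op :: "(real^'n) set \<Rightarrow> (real^'n \<Rightarrow> complex) \<Rightarrow> (real^'n \<Rightarrow> complex) \<Rightarrow> real^'n \<Rightarrow> complex"
  where "hermite_op Rp \<kappa> f x = dunkl_lap Rp \<kappa> f x - 2 * euler_op f x"

text \<open>The \<open>i\<close>-th component \<open>-T\<^sub>i + 2x\<^sub>i\<close> of \<open>D\<^sub>+\<close>.\<close>

definition raising_op :: "(real^'n) set \<Rightarrow> (real^'n \<Rightarrow> complex) \<Rightarrow> 'n \<Rightarrow> (real^'n \<Rightarrow> complex) \<Rightarrow> real^'n \<Rightarrow> complex"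
  where "raising_op Rp \<kappa> i q x = - dunkl Rp \<kappa> i q x + 2 * (complex_of_real (x$i) * q x)"

context dunkl_system
begin

lemma raising_op_eq:
  "raising_op Rp \<kappa> i q = (\<lambda>y. (-1) * dunkl_dir (axis i 1) q y + 2 * (complex_of_real (y$i) * q y))"
  by (simp add: fun_eq_iff raising_op_def dunkl_eq_dunkl_dir)

lemma poly_fun_raising_op: "q \<in> poly_fun \<Longrightarrow> raising_op Rp \<kappa> i q \<in> poly_fun"
  unfolding raising_op_eq by (intro poly_fun_add poly_fun_cmult poly_fun_dunkl_dir poly_fun_coord_mult)

lemma raising_op_cmult: "q \<in> poly_fun \<Longrightarrow> raising_op Rp \<kappa> i (\<lambda>y. c * q y) x = c * raising_op Rp \<kappa> i q x"
  by (simp add: raising_op_eq dunkl_dir_cmult algebra_simps)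

lemma hermite_op_add:
  "p \<in> poly_fun \<Longrightarrow> q \<in> poly_fun \<Longrightarrow>
    hermite_op Rp \<kappa> (\<lambda>y. p y + q y) x = hermite_op Rp \<kappa> p x + hermite_op Rp \<kappa> q x"
  by (simp add: hermite_op_def dunkl_lap_add euler_op_add algebra_simps)

lemma hermite_op_cmult: "q \<in> poly_fun \<Longrightarrow> hermite_op Rp \<kappa> (\<lambda>y. c * q y) x = c * hermite_op Rp \<kappa> q x"
  by (simp add: hermite_op_def dunkl_lap_cmult euler_op_cmult algebra_simps)

lemma hermite_op_sum: "(\<And>i. i \<in> S \<Longrightarrow> f i \<in> poly_fun) \<Longrightarrow>
    hermite_op Rp \<kappa> (\<lambda>y. \<Sum>i\<in>S. f i y) x = (\<Sum>i\<in>S. hermite_op Rp \<kappa> (f i) x)"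
  using additive_on_poly_fun_sum[of "\<lambda>q. hermite_op Rp \<kappa> q x"] hermite_op_add by blast

lemma hermite_op_raising_op:
  assumes q: "q \<in> poly_fun"
  shows "hermite_op Rp \<kappa> (raising_op Rp \<kappa> i q) x
    = raising_op Rp \<kappa> i (hermite_op Rp \<kappa> q) x - 2 * raising_op Rp \<kappa> i q x"
proof -
  have Tq: "dunkl_dir (axis i 1) q \<in> poly_fun" by (rule poly_fun_dunkl_dir[OF q])
  have A: "(\<lambda>y. (-1) * dunkl_dir (axis i 1) q y) \<in> poly_fun" by (rule poly_fun_cmult[OF Tq])
  have B: "(\<lambda>y. 2 * (complex_of_real (y$i) * q y)) \<in> poly_fun"
    by (rule poly_fun_cmult[OF poly_fun_coord_mult[OF q]])
  have lap: "dunkl_lap Rp \<kappa> (raising_op Rp \<kappa> i q) x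
      = (-1) * dunkl_dir (axis i 1) (dunkl_lap Rp \<kappa> q) x
        + 2 * (complex_of_real (x$i) * dunkl_lap Rp \<kappa> q x + 2 * dunkl_dir (axis i 1) q x)"
    unfolding raising_op_eq dunkl_lap_add[OF A B] dunkl_lap_cmult[OF Tq]
      dunkl_lap_cmult[OF poly_fun_coord_mult[OF q]] dunkl_lap_dunkl_dir[OF q] dunkl_lap_coord_mult[OF q] ..
  have euler: "euler_op (raising_op Rp \<kappa> i q) x
      = (-1) * (dunkl_dir (axis i 1) (euler_op q) x - dunkl_dir (axis i 1) q x)
        + 2 * (complex_of_real (x$i) * (q x + euler_op q x))"
    unfolding raising_op_eq euler_op_add[OF A B] euler_op_cmult[OF Tq]
      euler_op_cmult[OF poly_fun_coord_mult[OF q]] euler_op_coord_mult[OF q] euler_op_dunkl_dir[OF q] ..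
  have "hermite_op Rp \<kappa> q = (\<lambda>y. dunkl_lap Rp \<kappa> q y + (-2) * euler_op q y)"
    by (simp add: fun_eq_iff hermite_op_def)
  then have "dunkl_dir (axis i 1) (hermite_op Rp \<kappa> q) x
      = dunkl_dir (axis i 1) (dunkl_lap Rp \<kappa> q) x + (-2) * dunkl_dir (axis i 1) (euler_op q) x"
    by (simp only: dunkl_dir_add[OF poly_fun_dunkl_lap[OF q] poly_fun_cmult[OF poly_fun_euler_op[OF q]]]
        dunkl_dir_cmult[OF poly_fun_euler_op[OF q]])
  then show ?thesis
    unfolding hermite_op_def[of _ _ "raising_op Rp \<kappa> i q"] lap euler
    by (simp add: raising_op_eq hermite_op_def algebra_simps)
qed

end

definition clif_e_coeff :: "'n::{finite,linorder} \<Rightarrow> 'n set \<Rightarrow> 'n set \<Rightarrow> complex" where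
  "clif_e_coeff i B C = (if ({i} - B) \<union> (B - {i}) = C then clif_sign {i} B else 0)"

lemma clif_mult_e: "clif_mult (clif_e i) G C = (\<Sum>B\<in>UNIV. clif_e_coeff i B C * G B)"
proof -
  have "(\<Sum>B\<in>UNIV. if (A - B) \<union> (B - A) = C then clif_sign A B * clif_e i A * G B else 0)
      = (if A = {i} then (\<Sum>B\<in>UNIV. clif_e_coeff i B C * G B) else 0)" for A
    by (cases "A = {i}") (auto simp: clif_e_def clif_e_coeff_def intro!: sum.cong cong: if_cong)
  then show ?thesis unfolding clif_mult_def by simp
qed

lemma clif_mult_x: "clif_mult (clif_x x) G C = (\<Sum>i\<in>UNIV. complex_of_real (x$i) * clif_mult (clif_e i) G C)"
proof -
  let ?P = "\<lambda>A B. (A - B) \<union> (B - A) = C"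
  have x_eq: "clif_x x A = (\<Sum>i\<in>UNIV. complex_of_real (x$i) * clif_e i A)" for A
    unfolding clif_x_def clif_e_def by (rule sum.cong) auto
  have "(if ?P A B then clif_sign A B * clif_x x A * G B else 0)
      = (\<Sum>i\<in>UNIV. complex_of_real (x$i) * (if ?P A B then clif_sign A B * clif_e i A * G B else 0))"
    for A B
    unfolding x_eq by (cases "?P A B") (simp_all add: sum_distrib_left sum_distrib_right mult_ac)
  then have "clif_mult (clif_x x) G C
      = (\<Sum>A\<in>UNIV. \<Sum>B\<in>UNIV. \<Sum>i\<in>UNIV.
           complex_of_real (x$i) * (if ?P A B then clif_sign A B * clif_e i A * G B else 0))"
    unfolding clif_mult_def by simp
  also have "\<dots> = (\<Sum>i\<in>UNIV. \<Sum>A\<in>UNIV. \<Sum>B\<in>UNIV.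
           complex_of_real (x$i) * (if ?P A B then clif_sign A B * clif_e i A * G B else 0))"
    by (subst sum.swap) (rule sum.cong[OF refl], rule sum.swap)
  also have "\<dots> = (\<Sum>i\<in>UNIV. complex_of_real (x$i) * clif_mult (clif_e i) G C)"
    unfolding clif_mult_def by (simp add: sum_distrib_left)
  finally show ?thesis .
qed

lemma D_plus_expand:
  "D_plus Rp \<kappa> F x C = (\<Sum>i\<in>UNIV. \<Sum>B\<in>UNIV. clif_e_coeff i B C * raising_op Rp \<kappa> i (\<lambda>y. F y B) x)"
  unfolding D_plus_def dirac_dunkl_def dunkl_cl_def clif_mult_x clif_mult_e raising_op_def
  by (simp add: sum_distrib_left sum.distrib sum_subtractf algebra_simps sum_negf)

definition hermite_eigen ::
    "((real,'n::{finite,linorder}) vec) set \<Rightarrow> ((real,'n) vec \<Rightarrow> complex) \<Rightarrow> complex \<Rightarrow>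
      ((real,'n) vec \<Rightarrow> 'n clif) \<Rightarrow> bool"
  where "hermite_eigen Rp \<kappa> c G \<longleftrightarrow>
    (\<forall>B. (\<lambda>y. G y B) \<in> poly_fun \<and> (\<forall>x. hermite_op Rp \<kappa> (\<lambda>y. G y B) x = c * G x B))"

lemma hermite_eigen_harmonic:
  assumes "H \<in> dunkl_harmonics Rp \<kappa> k"
  shows "hermite_eigen Rp \<kappa> (-2 * of_nat k) (\<lambda>x. clif_scalar (complex_of_real (H x)))"
proof -
  have homog: "homog_poly k H" and harmonic: "\<And>x. dunkl_lap Rp \<kappa> (\<lambda>y. complex_of_real (H y)) x = 0"
    using assms unfolding dunkl_harmonics_def by auto
  have "dunkl Rp \<kappa> i (\<lambda>y. 0) = (\<lambda>y. 0)" for i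
    by (simp add: fun_eq_iff dunkl_def divdiff_const fderiv_const)
  then have "hermite_op Rp \<kappa> (\<lambda>y. 0) x = 0" for x
    by (simp add: hermite_op_def dunkl_lap_def euler_op_def fderiv_const)
  moreover have "hermite_op Rp \<kappa> (\<lambda>y. complex_of_real (H y)) x = -2 * of_nat k * complex_of_real (H x)" for x
    by (simp add: hermite_op_def harmonic euler_op_homog_poly[OF homog])
  ultimately have "(\<lambda>y. clif_scalar (complex_of_real (H y)) B) \<in> poly_fun
      \<and> (\<forall>x. hermite_op Rp \<kappa> (\<lambda>y. clif_scalar (complex_of_real (H y)) B) x
             = -2 * of_nat k * clif_scalar (complex_of_real (H x)) B)" for B
    using poly_fun_homog_poly[OF homog] poly_fun_const[of 0]
    by (cases "B = {}") (simp_all add: clif_scalar_def)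
  then show ?thesis unfolding hermite_eigen_def by blast
qed

lemma hermite_eigen_D_plus:
  assumes "dunkl_system R Rp \<kappa>" and G: "hermite_eigen Rp \<kappa> c G"
  shows "hermite_eigen Rp \<kappa> (c - 2) (D_plus Rp \<kappa> G)"
proof -
  interpret dunkl_system R Rp \<kappa> by fact
  have poly: "(\<lambda>y. G y B) \<in> poly_fun" and eigen: "hermite_op Rp \<kappa> (\<lambda>y. G y B) = (\<lambda>y. c * G y B)" for B
    using G by (auto simp: hermite_eigen_def)
  have D_plus_eq: "(\<lambda>y. D_plus Rp \<kappa> G y C)
      = (\<lambda>y. \<Sum>i\<in>UNIV. \<Sum>B\<in>UNIV. clif_e_coeff i B C * raising_op Rp \<kappa> i (\<lambda>z. G z B) y)" for C
    by (simp add: fun_eq_iff D_plus_expand)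
  have poly_terms: "(\<lambda>y. \<Sum>B\<in>UNIV. clif_e_coeff i B C * raising_op Rp \<kappa> i (\<lambda>z. G z B) y) \<in> poly_fun" for i C
    by (intro poly_fun_sum poly_fun_cmult poly_fun_raising_op poly)
  have "hermite_op Rp \<kappa> (\<lambda>y. D_plus Rp \<kappa> G y C) x = (c - 2) * D_plus Rp \<kappa> G x C" for C x
  proof -
    have "hermite_op Rp \<kappa> (\<lambda>y. D_plus Rp \<kappa> G y C) x
        = (\<Sum>i\<in>UNIV. \<Sum>B\<in>UNIV. clif_e_coeff i B C * hermite_op Rp \<kappa> (raising_op Rp \<kappa> i (\<lambda>z. G z B)) x)"
      unfolding D_plus_eq
      by (simp add: hermite_op_sum poly_terms poly_fun_cmult poly_fun_raising_op poly hermite_op_cmult)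
    also have "\<dots> = (\<Sum>i\<in>UNIV. \<Sum>B\<in>UNIV. clif_e_coeff i B C * ((c - 2) * raising_op Rp \<kappa> i (\<lambda>z. G z B) x))"
      by (simp add: hermite_op_raising_op poly eigen raising_op_cmult algebra_simps)
    also have "\<dots> = (c - 2) * D_plus Rp \<kappa> G x C"
      by (simp add: D_plus_expand sum_distrib_left algebra_simps)
    finally show ?thesis .
  qed
  moreover have "(\<lambda>y. D_plus Rp \<kappa> G y C) \<in> poly_fun" for C
    unfolding D_plus_eq by (intro poly_fun_sum poly_terms)
  ultimately show ?thesis by (simp add: hermite_eigen_def)
qed

lemma hermite_eigen_D_plus_power:
  assumes "dunkl_system R Rp \<kappa>" and "H \<in> dunkl_harmonics Rp \<kappa> k"
  shows "hermite_eigen Rp \<kappa> (-2 * of_nat (n + k))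
    ((D_plus Rp \<kappa> ^^ n) (\<lambda>x. clif_scalar (complex_of_real (H x))))"
proof (induction n)
  case 0
  then show ?case using hermite_eigen_harmonic[OF assms(2)] by simp
next
  case (Suc n)
  have "-2 * of_nat (Suc n + k) = -2 * of_nat (n + k) - (2::complex)" by (simp add: algebra_simps)
  with hermite_eigen_D_plus[OF assms(1) Suc.IH] show ?case by simp
qed

lemma dunkl_system_root_system:
  assumes "reduced_root_system R" and norm: "\<forall>\<alpha>\<in>R. \<alpha> \<bullet> \<alpha> = 2"
    and "positive_subsystem R Rp" and "multiplicity_function R \<kappa>"
  shows "dunkl_system R Rp \<kappa>"
proof
  have closed: "\<alpha> \<in> R \<Longrightarrow> \<beta> \<in> R \<Longrightarrow> root_refl \<alpha> \<beta> \<in> R" for \<alpha> \<beta>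
    using assms(1) unfolding reduced_root_system_def by blast
  obtain b where b: "\<forall>\<alpha>\<in>R. \<alpha> \<bullet> b \<noteq> 0" and Rp: "Rp = {\<alpha>\<in>R. \<alpha> \<bullet> b > 0}"
    using assms(3) unfolding positive_subsystem_def by blast
  show "finite R" using assms(1) unfolding reduced_root_system_def by blast
  show "\<alpha> \<in> R \<Longrightarrow> \<alpha> \<bullet> \<alpha> = 2" for \<alpha> using norm by blast
  show "\<alpha> \<in> R \<Longrightarrow> \<beta> \<in> R \<Longrightarrow> root_refl \<alpha> \<beta> \<in> R" for \<alpha> \<beta> by (rule closed)
  show "Rp \<subseteq> R" using Rp by auto
  show "\<alpha> \<in> Rp \<longleftrightarrow> - \<alpha> \<notin> Rp" if "\<alpha> \<in> R" for \<alpha>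
    using that b closed[OF that that] root_refl_self[of \<alpha>] norm unfolding Rp by force
  show "\<kappa> (root_refl \<alpha> \<beta>) = \<kappa> \<beta>" if "\<alpha> \<in> R" "\<beta> \<in> R" for \<alpha> \<beta>
    using assms(4) refl_group.rg_step[OF refl_group.rg_id that(1)] that(2)
    unfolding multiplicity_function_def by auto
qed

theorem theorem3p3:
  fixes R Rp :: "((real,'n::{finite,linorder}) vec) set"
    and \<kappa> :: "(real,'n) vec \<Rightarrow> complex"
    and H :: "(real,'n) vec \<Rightarrow> real"
    and k t :: nat
  assumes "reduced_root_system R"
    and "\<forall>\<alpha>\<in>R. \<alpha> \<bullet> \<alpha> = 2"
    and "positive_subsystem R Rp"
    and "multiplicity_function R \<kappa>"
    and "H \<in> dunkl_harmonics Rp \<kappa> k"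
    and "t > 0"
  shows "\<forall>x A. dunkl_lap Rp \<kappa> (\<lambda>y. clifford_hermite Rp \<kappa> t H y A) x
                 - 2 * euler_op (\<lambda>y. clifford_hermite Rp \<kappa> t H y A) x
               = - 2 * of_nat (2 * t + k) * clifford_hermite Rp \<kappa> t H x A"
proof -
  \<comment> \<open>The identity holds for every power of \<open>D\<^sub>+\<close>.\<close>
  have "dunkl_system R Rp \<kappa>" using assms(1-4) by (rule dunkl_system_root_system)
  from hermite_eigen_D_plus_power[OF this assms(5), of "2 * t"]
  show ?thesis by (simp add: hermite_eigen_def hermite_op_def clifford_hermite_def)
qed

end
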